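(* In algorithm StochKnap with parameter $C>1$, suppose the critical scale satisfies $\kappa>1$. Then for every subset $O\subseteq N$ with $c(O)\le B$, we have $\sum_{i\in S\setminus O}r_\kappa(i)\ge\frac{\epsilon(C-1)}{2}$, where $S=S_\kappa$ is the output.
   Context: Algorithm StochKnap$(N,c,R,B,\epsilon)$ with parameter $C>0$: $N$ is a finite set of items, item $i$ has cost $c(i)>0$ and a nonnegative random reward $R(i)$, rewards independent; $W\ge1$ is an integer with $\sum_{i\in N}\mathbb E[R(i)]\le W$; $B>0$, $\epsilon\in(0,1)$. Let $T=\{i\in N: c(i)\le B\}$ and $D=CB$. For $\tau>0$ let $r_\tau(i)=\mathbb E[\min\{R(i)/\tau,1\}]$. Order $T$ as $i_1,i_2,\ldots$ with $r_\tau(i_j)/c(i_j)$ nonincreasing. If $c(T)\ge D$, let $t$ be the smallest index with $\sum_{j\le t}c(i_j)\ge D$, set $S_\tau=\{i_1,\ldots,i_t\}$ and slope $s_\tau=r_\tau(i_t)/c(i_t)$; otherwise $S_\tau=T$, $s_\tau=0$. Scale $\tau$ is rich if $s_\tau>\epsilon/B$, poor otherwise. Scales $\mathcal G=\{2^\ell:\ell\in\mathbb Z,0\le\ell\le\lceil\log_2W\rceil\}$; critical scale $\kappa$ = smallest poor scale in $\mathcal G$ (assumed to exist); output $S=S_\kappa$. *)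

theory Defs
  imports "HOL-Probability.Probability"
begin

definition rtrunc :: "'b measure \<Rightarrow> ('a \<Rightarrow> 'b \<Rightarrow> real) \<Rightarrow> real \<Rightarrow> 'a \<Rightarrow> real" where
  "rtrunc M R \<tau> i = (\<integral>\<omega>. min (R i \<omega> / \<tau>) 1 \<partial>M)"

definition small_items :: "'a set \<Rightarrow> ('a \<Rightarrow> real) \<Rightarrow> real \<Rightarrow> 'a set" where
  "small_items N c B = {i \<in> N. c i \<le> B}"

definition ratio_order :: "'a set \<Rightarrow> ('a \<Rightarrow> real) \<Rightarrow> ('a \<Rightarrow> real) \<Rightarrow> (nat \<Rightarrow> 'a) \<Rightarrow> bool" where
  "ratio_order T c r \<sigma> \<longleftrightarrow> bij_betw \<sigma> {..<card T} T \<and>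
     (\<forall>j k. j \<le> k \<and> k < card T \<longrightarrow> r (\<sigma> k) / c (\<sigma> k) \<le> r (\<sigma> j) / c (\<sigma> j))"

definition cut_index :: "('a \<Rightarrow> real) \<Rightarrow> real \<Rightarrow> (nat \<Rightarrow> 'a) \<Rightarrow> nat" where
  "cut_index c D \<sigma> = (LEAST t. D \<le> (\<Sum>j\<le>t. c (\<sigma> j)))"

definition greedy_set :: "'a set \<Rightarrow> ('a \<Rightarrow> real) \<Rightarrow> real \<Rightarrow> (nat \<Rightarrow> 'a) \<Rightarrow> 'a set" where
  "greedy_set T c D \<sigma> = (if D \<le> sum c T then \<sigma> ` {..cut_index c D \<sigma>} else T)"

definition greedy_slope :: "'a set \<Rightarrow> ('a \<Rightarrow> real) \<Rightarrow> ('a \<Rightarrow> real) \<Rightarrow> real \<Rightarrow> (nat \<Rightarrow> 'a) \<Rightarrow> real" where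
  "greedy_slope T c r D \<sigma> =
     (if D \<le> sum c T then r (\<sigma> (cut_index c D \<sigma>)) / c (\<sigma> (cut_index c D \<sigma>)) else 0)"

definition scales :: "nat \<Rightarrow> real set" where
  "scales W = (\<lambda>l::nat. (2::real) ^ l) ` {0..nat \<lceil>log 2 (real W)\<rceil>}"

end

theory Submission
  imports Defs
begin

text \<open>Let \<open>\<kappa>' = \<kappa>/2\<close>, a rich scale since \<open>\<kappa>\<close> is the smallest poor one. Halving the scale at most
  halves the truncated rewards, so every item of the greedy set \<open>S_\<kappa>'\<close> has reward density
  \<open>r_\<kappa>/c > \<epsilon>/(2B)\<close>. Either the slope of \<open>S_\<kappa>\<close> is at least \<open>\<epsilon>/(2B)\<close>, and then all of \<open>S_\<kappa>\<close> is
  that dense, or it is smaller, and then \<open>S_\<kappa>'\<close> lies inside \<open>S_\<kappa>\<close>. In both cases \<open>S_\<kappa>\<close> contains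
  a set of cost at least \<open>CB\<close> and density at least \<open>\<epsilon>/(2B)\<close>; removing a set \<open>O\<close> of cost at
  most \<open>B\<close> leaves reward at least \<open>\<epsilon>/(2B) \<cdot> (CB - B)\<close>.\<close>

lemma ratio_order_ratio_mono:
  assumes "ratio_order T c r \<sigma>" "j \<le> k" "k < card T"
  shows "r (\<sigma> k) / c (\<sigma> k) \<le> r (\<sigma> j) / c (\<sigma> j)"
  using assms unfolding ratio_order_def by blast

lemma ratio_order_bij:
  assumes "ratio_order T c r \<sigma>"
  shows "bij_betw \<sigma> {..<card T} T"
  using assms unfolding ratio_order_def by blast

lemma cut_index_props:
  assumes ro: "ratio_order T c r \<sigma>" and Dpos: "0 < D" and DT: "D \<le> sum c T"
  shows "cut_index c D \<sigma> < card T" and "D \<le> (\<Sum>j\<le>cut_index c D \<sigma>. c (\<sigma> j))"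
proof -
  define n where "n = card T"
  have bij: "bij_betw \<sigma> {..<n} T"
    using ratio_order_bij[OF ro] unfolding n_def .
  have "sum c T = (\<Sum>j<n. c (\<sigma> j))"
    using sum.reindex_bij_betw[OF bij, of c] by simp
  with DT Dpos have n0: "0 < n" by (cases n) auto
  with DT \<open>sum c T = _\<close> have Dn: "D \<le> (\<Sum>j\<le>n - 1. c (\<sigma> j))"
    by (simp add: lessThan_Suc_atMost[symmetric])
  have "cut_index c D \<sigma> \<le> n - 1"
    unfolding cut_index_def using Dn by (rule Least_le)
  with n0 show "cut_index c D \<sigma> < card T" unfolding n_def by simp
  show "D \<le> (\<Sum>j\<le>cut_index c D \<sigma>. c (\<sigma> j))"
    unfolding cut_index_def using Dn by (rule LeastI)
qed

lemma greedy_set_cut: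
  assumes "D \<le> sum c T"
  shows "greedy_set T c D \<sigma> = \<sigma> ` {..cut_index c D \<sigma>}"
    and "greedy_slope T c r D \<sigma> = r (\<sigma> (cut_index c D \<sigma>)) / c (\<sigma> (cut_index c D \<sigma>))"
  using assms unfolding greedy_set_def greedy_slope_def by simp_all

lemma greedy_set_subset:
  assumes "ratio_order T c r \<sigma>" "0 < D"
  shows "greedy_set T c D \<sigma> \<subseteq> T"
proof (cases "D \<le> sum c T")
  case True
  then have "{..cut_index c D \<sigma>} \<subseteq> {..<card T}"
    using cut_index_props(1)[OF assms] by auto
  then show ?thesis
    using bij_betw_imp_surj_on[OF ratio_order_bij[OF assms(1)]] greedy_set_cut(1)[OF True] by auto
qed (simp add: greedy_set_def)

lemma greedy_set_cost:
  assumes ro: "ratio_order T c r \<sigma>" and "0 < D" "D \<le> sum c T"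
  shows "D \<le> sum c (greedy_set T c D \<sigma>)"
proof -
  let ?t = "cut_index c D \<sigma>"
  have "{..?t} \<subseteq> {..<card T}" using cut_index_props(1)[OF assms] by auto
  then have "inj_on \<sigma> {..?t}"
    using bij_betw_imp_inj_on[OF ratio_order_bij[OF ro]] inj_on_subset by blast
  then show ?thesis
    using cut_index_props(2)[OF assms] greedy_set_cut(1)[OF assms(3)] sum.reindex[of \<sigma> "{..?t}" c]
    by simp
qed

lemma greedy_slope_le_ratio:
  assumes ro: "ratio_order T c r \<sigma>" and "0 < D" "D \<le> sum c T"
    and "i \<in> greedy_set T c D \<sigma>"
  shows "greedy_slope T c r D \<sigma> \<le> r i / c i"
  using assms cut_index_props(1)[OF ro] ratio_order_ratio_mono[OF ro]
  by (auto simp: greedy_set_cut)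

lemma ratio_gt_greedy_slope_in_greedy_set:
  assumes ro: "ratio_order T c r \<sigma>" and "0 < D" and iT: "i \<in> T"
    and gt: "greedy_slope T c r D \<sigma> < r i / c i"
  shows "i \<in> greedy_set T c D \<sigma>"
proof (cases "D \<le> sum c T")
  case DT: True
  let ?t = "cut_index c D \<sigma>"
  obtain k where k: "k < card T" "\<sigma> k = i"
    using bij_betw_imp_surj_on[OF ratio_order_bij[OF ro]] iT by force
  have "k \<le> ?t"
  proof (rule ccontr)
    assume "\<not> k \<le> ?t"
    then have "r i / c i \<le> greedy_slope T c r D \<sigma>"
      using ratio_order_ratio_mono[OF ro, of ?t k] k greedy_set_cut(2)[OF DT] by simp
    with gt show False by simp
  qed
  with k show ?thesis using greedy_set_cut(1)[OF DT] by auto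
qed (use iT in \<open>simp add: greedy_set_def\<close>)

lemma greedy_set_contains_dense_cover:
  assumes cpos: "\<forall>i\<in>T. 0 < c i"
    and ro: "ratio_order T c r \<sigma>" and ro': "ratio_order T c r' \<sigma>'"
    and Dpos: "0 < D" and e: "0 \<le> e"
    and rich: "2 * e < greedy_slope T c r' D \<sigma>'"
    and half: "\<forall>i\<in>T. r' i \<le> 2 * r i"
  shows "\<exists>X \<subseteq> greedy_set T c D \<sigma>. D \<le> sum c X \<and> (\<forall>i\<in>X. e * c i \<le> r i)"
proof -
  have DT: "D \<le> sum c T"
    using rich e by (cases "D \<le> sum c T") (auto simp: greedy_slope_def)
  let ?S = "greedy_set T c D \<sigma>" and ?S' = "greedy_set T c D \<sigma>'"
  show ?thesis
  proof (cases "e \<le> greedy_slope T c r D \<sigma>")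
    case True
    have "e * c i \<le> r i" if "i \<in> ?S" for i
    proof -
      have "e \<le> r i / c i"
        using True greedy_slope_le_ratio[OF ro Dpos DT that] by linarith
      moreover have "0 < c i" using cpos greedy_set_subset[OF ro Dpos] that by auto
      ultimately show ?thesis by (simp add: pos_le_divide_eq)
    qed
    then show ?thesis using greedy_set_cost[OF ro Dpos DT] by blast
  next
    case False
    have dense: "e * c i < r i" and inS: "i \<in> ?S" if iS': "i \<in> ?S'" for i
    proof -
      have iT: "i \<in> T" using greedy_set_subset[OF ro' Dpos] iS' by auto
      have ci: "0 < c i" using cpos iT by auto
      have "2 * e < r' i / c i"
        using rich greedy_slope_le_ratio[OF ro' Dpos DT iS'] by linarith
      then have "2 * e * c i < r' i" using ci by (simp add: pos_less_divide_eq)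
      then show "e * c i < r i" using half iT by auto
      then have "e < r i / c i" using ci by (simp add: pos_less_divide_eq)
      then have "greedy_slope T c r D \<sigma> < r i / c i" using False by linarith
      then show "i \<in> ?S" by (rule ratio_gt_greedy_slope_in_greedy_set[OF ro Dpos iT])
    qed
    have "?S' \<subseteq> ?S" using inS by blast
    then show ?thesis
      using greedy_set_cost[OF ro' Dpos DT] dense less_imp_le by blast
  qed
qed

lemma sum_diff_ge_of_dense_cover:
  fixes r c :: "'a \<Rightarrow> real"
  assumes finS: "finite S" and XS: "X \<subseteq> S" and rnn: "\<forall>i\<in>S. 0 \<le> r i"
    and finQ: "finite Q" and cnn: "\<forall>i\<in>Q. 0 \<le> c i" and cQ: "sum c Q \<le> B"
    and cX: "D \<le> sum c X" and e: "0 \<le> e" and dense: "\<forall>i\<in>X. e * c i \<le> r i"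
  shows "e * (D - B) \<le> (\<Sum>i\<in>S - Q. r i)"
proof -
  have finX: "finite X" using finS XS finite_subset by blast
  have "sum c (X \<inter> Q) \<le> sum c Q"
    by (rule sum_mono2) (use finQ cnn in auto)
  then have "D - B \<le> sum c (X - Q)"
    using cX cQ sum.Int_Diff[OF finX, of c Q] by linarith
  then have "e * (D - B) \<le> e * sum c (X - Q)" using e by (rule mult_left_mono)
  also have "\<dots> = (\<Sum>i\<in>X - Q. e * c i)" by (simp add: sum_distrib_left)
  also have "\<dots> \<le> (\<Sum>i\<in>X - Q. r i)" using dense by (intro sum_mono) auto
  also have "\<dots> \<le> (\<Sum>i\<in>S - Q. r i)"
    by (rule sum_mono2) (use finS XS rnn in auto)
  finally show ?thesis .
qed

lemma (in prob_space) integrable_truncated: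
  fixes f :: "'a \<Rightarrow> real"
  assumes "f \<in> borel_measurable M" "\<forall>\<omega>\<in>space M. 0 \<le> f \<omega>" "0 \<le> \<tau>"
  shows "integrable M (\<lambda>\<omega>. min (f \<omega> / \<tau>) 1)"
proof (rule integrable_const_bound[where B=1])
  show "AE \<omega> in M. norm (min (f \<omega> / \<tau>) 1) \<le> 1"
    using assms by (auto intro!: AE_I2)
qed (use assms(1) in measurable)

lemma rtrunc_nonneg:
  assumes "\<forall>\<omega>\<in>space M. 0 \<le> R i \<omega>" "0 \<le> \<tau>"
  shows "0 \<le> rtrunc M R \<tau> i"
  unfolding rtrunc_def by (rule integral_nonneg_AE, rule AE_I2) (use assms in auto)

lemma rtrunc_le_twice_rtrunc_double:
  assumes "prob_space M" "R i \<in> borel_measurable M" "\<forall>\<omega>\<in>space M. 0 \<le> R i \<omega>" "0 < \<tau>"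
  shows "rtrunc M R \<tau> i \<le> 2 * rtrunc M R (2 * \<tau>) i"
proof -
  interpret prob_space M by fact
  have "rtrunc M R \<tau> i = (\<integral>\<omega>. min (R i \<omega> / \<tau>) 1 \<partial>M)"
    by (simp add: rtrunc_def)
  also have "\<dots> \<le> (\<integral>\<omega>. 2 * min (R i \<omega> / (2 * \<tau>)) 1 \<partial>M)"
  proof (rule integral_mono)
    fix \<omega> assume "\<omega> \<in> space M"
    with assms(3,4) show "min (R i \<omega> / \<tau>) 1 \<le> 2 * min (R i \<omega> / (2 * \<tau>)) 1"
      by (auto simp: min_def field_simps)
  qed (use integrable_truncated[of "R i"] assms in auto)
  also have "\<dots> = 2 * rtrunc M R (2 * \<tau>) i" by (simp add: rtrunc_def)
  finally show ?thesis .
qed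

lemma half_scale_in_scales:
  assumes "\<kappa> \<in> scales W" "1 < \<kappa>"
  shows "\<kappa> / 2 \<in> scales W"
proof -
  obtain l where l: "l \<le> nat \<lceil>log 2 (real W)\<rceil>" "\<kappa> = 2 ^ l"
    using assms(1) unfolding scales_def by auto
  with assms(2) obtain m where "l = Suc m" by (cases l) auto
  with l show ?thesis unfolding scales_def by force
qed

theorem mainTheorem9:
  fixes N :: "'a set" and c :: "'a \<Rightarrow> real"
    and M :: "'b measure" and R :: "'a \<Rightarrow> 'b \<Rightarrow> real"
    and W :: nat and B \<epsilon> C :: real
    and ord :: "real \<Rightarrow> nat \<Rightarrow> 'a"
    and \<kappa> :: real
  assumes finN: "finite N"
    and cpos: "\<forall>i\<in>N. c i > 0"
    and prob: "prob_space M"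
    and Rmeas: "\<forall>i\<in>N. R i \<in> borel_measurable M"
    and Rnonneg: "\<forall>i\<in>N. \<forall>\<omega>\<in>space M. R i \<omega> \<ge> 0"
    and Rint: "\<forall>i\<in>N. integrable M (R i)"
    and Rindep: "prob_space.indep_vars M (\<lambda>_. borel) R N"
    and W1: "W \<ge> 1"
    and Wbound: "(\<Sum>i\<in>N. (\<integral>\<omega>. R i \<omega> \<partial>M)) \<le> real W"
    and Bpos: "B > 0"
    and eps: "0 < \<epsilon>" "\<epsilon> < 1"
    and C1: "C > 1"
    and order: "\<forall>\<tau>\<in>scales W. ratio_order (small_items N c B) c (rtrunc M R \<tau>) (ord \<tau>)"
    and kappa_scale: "\<kappa> \<in> scales W"
    and kappa_poor: "greedy_slope (small_items N c B) c (rtrunc M R \<kappa>) (C * B) (ord \<kappa>) \<le> \<epsilon> / B"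
    and below_rich: "\<forall>\<tau>\<in>scales W. \<tau> < \<kappa> \<longrightarrow>
        greedy_slope (small_items N c B) c (rtrunc M R \<tau>) (C * B) (ord \<tau>) > \<epsilon> / B"
    and kappa_gt1: "\<kappa> > 1"
  shows "\<forall>Opt. Opt \<subseteq> N \<and> sum c Opt \<le> B \<longrightarrow>
    (\<Sum>i\<in>(greedy_set (small_items N c B) c (C * B) (ord \<kappa>) - Opt). rtrunc M R \<kappa> i)
      \<ge> \<epsilon> * (C - 1) / 2"
proof (intro allI impI)
  fix Opt assume Opt: "Opt \<subseteq> N \<and> sum c Opt \<le> B"
  define T where "T = small_items N c B"
  define S where "S = greedy_set T c (C * B) (ord \<kappa>)"
  define e where "e = \<epsilon> / (2 * B)"
  have TN: "T \<subseteq> N" unfolding T_def small_items_def by auto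
  have cT: "\<forall>i\<in>T. 0 < c i" using cpos TN by auto
  have Dpos: "0 < C * B" using C1 Bpos by simp
  have e0: "0 \<le> e" using eps Bpos unfolding e_def by simp
  have half_scale: "\<kappa> / 2 \<in> scales W" by (rule half_scale_in_scales[OF kappa_scale kappa_gt1])
  have ro: "ratio_order T c (rtrunc M R \<kappa>) (ord \<kappa>)"
    using order kappa_scale unfolding T_def by blast
  have ro': "ratio_order T c (rtrunc M R (\<kappa> / 2)) (ord (\<kappa> / 2))"
    using order half_scale unfolding T_def by blast
  have "2 * e = \<epsilon> / B" unfolding e_def using Bpos by simp
  then have half_rich: "2 * e < greedy_slope T c (rtrunc M R (\<kappa> / 2)) (C * B) (ord (\<kappa> / 2))"
    using below_rich half_scale kappa_gt1 unfolding T_def by simp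
  have "\<forall>i\<in>T. rtrunc M R (\<kappa> / 2) i \<le> 2 * rtrunc M R \<kappa> i"
  proof
    fix i assume "i \<in> T"
    with TN have "i \<in> N" by blast
    from rtrunc_le_twice_rtrunc_double[OF prob, of R i "\<kappa> / 2"] this Rmeas Rnonneg kappa_gt1
    show "rtrunc M R (\<kappa> / 2) i \<le> 2 * rtrunc M R \<kappa> i" by simp
  qed
  then obtain X where X: "X \<subseteq> S" "C * B \<le> sum c X" "\<forall>i\<in>X. e * c i \<le> rtrunc M R \<kappa> i"
    using greedy_set_contains_dense_cover[OF cT ro ro' Dpos e0 half_rich] unfolding S_def by auto
  have SN: "S \<subseteq> N" using greedy_set_subset[OF ro Dpos] TN unfolding S_def by blast
  have "e * (C * B - B) \<le> (\<Sum>i\<in>S - Opt. rtrunc M R \<kappa> i)"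
  proof (rule sum_diff_ge_of_dense_cover[OF _ X(1) _ _ _ _ X(2) e0 X(3)])
    show "finite S" using finN SN by (rule finite_subset[rotated])
    show "finite Opt" using finN Opt by (blast intro: finite_subset)
    show "\<forall>i\<in>S. 0 \<le> rtrunc M R \<kappa> i"
      using SN Rnonneg kappa_gt1 by (intro ballI rtrunc_nonneg) auto
    show "\<forall>i\<in>Opt. 0 \<le> c i" using Opt cpos by (auto intro: less_imp_le)
  qed (use Opt in simp)
  moreover have "e * (C * B - B) = \<epsilon> * (C - 1) / 2"
    unfolding e_def using Bpos by (simp add: field_simps)
  ultimately show "\<epsilon> * (C - 1) / 2 \<le> (\<Sum>i\<in>greedy_set T c (C * B) (ord \<kappa>) - Opt. rtrunc M R \<kappa> i)"
    unfolding S_def by simp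
qed

end
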